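(* Let $d\ge1$, $f(t)=e^{-\pi|t|^2}$ on $\mathbb{R}^d$, $N>1$ and $0<R<\sqrt{\log N/\pi}$. Then there is no $g\in L^2(\mathbb{R}^d)\setminus\{0\}$ such that \[ |V_g f(z)|<\frac{|\langle f,g\rangle|}{N}\quad\text{for all } z\in\mathbb{R}^{2d}\text{ with } |z|>R. \]
   Context: For $f,g\in L^2(\mathbb{R}^d)$, the short-time Fourier transform is $V_g f(x,\omega)=\int_{\mathbb{R}^d} e^{-2\pi i t\cdot\omega} f(t)\overline{g(t-x)}\,dt$ for $z=(x,\omega)\in\mathbb{R}^{2d}$, and $\langle f,g\rangle=\int_{\mathbb{R}^d} f(t)\overline{g(t)}\,dt$. $|\cdot|$ is the Euclidean norm. *)

theory Defs
  imports "HOL-Analysis.Analysis"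
begin

text \<open>Functions on R^d are modelled as maps real^'n => complex (d = CARD('n)).\<close>

definition L2 :: "(real^'n \<Rightarrow> complex) set" where
  "L2 = {g. g \<in> borel_measurable lebesgue \<and> integrable lebesgue (\<lambda>t. (norm (g t))\<^sup>2)}"

definition inner_L2 :: "(real^'n \<Rightarrow> complex) \<Rightarrow> (real^'n \<Rightarrow> complex) \<Rightarrow> complex" where
  "inner_L2 f g = integral\<^sup>L lebesgue (\<lambda>t. f t * cnj (g t))"

definition stft :: "(real^'n \<Rightarrow> complex) \<Rightarrow> (real^'n \<Rightarrow> complex) \<Rightarrow> real^'n \<Rightarrow> real^'n \<Rightarrow> complex" where
  "stft g f x w = integral\<^sup>L lebesgue
     (\<lambda>t. exp (- 2 * complex_of_real pi * \<i> * complex_of_real (t \<bullet> w)) * f t * cnj (g (t - x)))"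

definition gaussian :: "real^'n \<Rightarrow> complex" where
  "gaussian t = complex_of_real (exp (- pi * (norm t)\<^sup>2))"

end

theory Submission
  imports Defs "HOL-Probability.Distributions" "HOL-Complex_Analysis.Cauchy_Integral_Formula"
begin

text \<open>
  Parametrise a circle of radius r in the time-frequency plane by
  z(t) = (r cos(2 pi t) e, r sin(2 pi t) e) with e a unit vector. For the Gaussian f, the
  phase-corrected transform exp(pi i x.w) V_g f(x, w) at z(t) is the integral over s of
  exp(-pi r^2/2) f(s) F_s(exp(2 pi i t)) conj(g(s)), where F_s(u) = exp(-2 pi r (s.e) u - pi r^2 u^2 / 2)
  is entire with F_s(0) = 1. The mean value property on the unit circle and Fubini's theorem show
  that its mean over the circle is exp(-pi r^2/2) <f, g>, so |V_g f| reaches exp(-pi r^2/2) |<f, g>|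
  somewhere on every circle. A radius R < r < sqrt(log N / pi) makes exp(-pi r^2/2) > 1/N.
\<close>

lemma has_integral_circle_mean:
  fixes F :: "complex \<Rightarrow> complex"
  assumes "continuous_on (cball 0 1) F" and "F holomorphic_on ball 0 1"
  shows "((\<lambda>t::real. F (exp (2 * pi * \<i> * t))) has_integral F 0) {0..1}"
proof -
  have "((\<lambda>u. F u / (u - 0)) has_contour_integral (2 * of_real pi * \<i> * F 0)) (circlepath 0 1)"
    using assms by (intro Cauchy_integral_circlepath) auto
  hence "((\<lambda>t::real. (2 * of_real pi * \<i>) * F (exp (2 * pi * \<i> * t)))
      has_integral (2 * of_real pi * \<i>) * F 0) {0..1}"
    unfolding has_contour_integral vector_derivative_circlepath by (simp add: circlepath field_simps)
  thus ?thesis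
    by (subst (asm) has_integral_mult_right_iff) auto
qed

lemma lborel_integral_circle_mean:
  fixes F :: "complex \<Rightarrow> complex"
  assumes "continuous_on (cball 0 1) F" and "F holomorphic_on ball 0 1"
  shows "(\<integral>t. indicator {0..1::real} t *\<^sub>R F (exp (2 * pi * \<i> * t)) \<partial>lborel) = F 0"
proof -
  let ?E = "\<lambda>t::real. F (exp (2 * pi * \<i> * t))"
  have "continuous_on {0..1} ?E"
    by (rule continuous_on_compose2[OF assms(1)]) (auto intro!: continuous_intros simp: norm_exp_i_times)
  hence "set_integrable lborel {0..1} ?E"
    unfolding set_integrable_def by (intro borel_integrable_compact) auto
  hence "(LINT t : {0..1} | lborel. ?E t) = integral {0..1} ?E"
    by (rule set_borel_integral_eq_integral(2))
  also have "\<dots> = F 0"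
    using has_integral_circle_mean[OF assms] by (rule integral_unique)
  finally show ?thesis unfolding set_lebesgue_integral_def .
qed

lemma integrable_lborel_exp_minus_pi_square: "integrable lborel (\<lambda>x::real. exp (- pi * x\<^sup>2))"
proof -
  have "normal_density 0 (sqrt (1 / (2 * pi))) = (\<lambda>x::real. exp (- pi * x\<^sup>2))"
    by (auto simp: normal_density_def fun_eq_iff field_simps)
  moreover have "integrable lborel (normal_density 0 (sqrt (1 / (2 * pi))))" by simp
  ultimately show ?thesis by simp
qed

lemma integrable_lebesgue_exp_minus_pi_norm_square:
  "integrable lebesgue (\<lambda>s::'a::euclidean_space. exp (- pi * (norm s)\<^sup>2))"
proof -
  interpret product_sigma_finite "\<lambda>_::'a. lborel :: real measure" by standard
  have norm_sum: "(norm (\<Sum>b\<in>Basis. f b *\<^sub>R b :: 'a))\<^sup>2 = (\<Sum>b\<in>Basis. (f b)\<^sup>2)" for f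
    unfolding power2_norm_eq_inner
    by (simp add: inner_sum_left inner_sum_right inner_Basis if_distrib power2_eq_square cong: if_cong)
  have "integrable (\<Pi>\<^sub>M b\<in>(Basis::'a set). lborel) (\<lambda>f. \<Prod>b\<in>Basis. exp (- pi * (f b)\<^sup>2))"
    using product_integrable_prod[of Basis "\<lambda>_ y. exp (- pi * y\<^sup>2)"]
      integrable_lborel_exp_minus_pi_square by simp
  hence "integrable (\<Pi>\<^sub>M b\<in>(Basis::'a set). lborel)
      (\<lambda>f. exp (- pi * (norm (\<Sum>b\<in>Basis. f b *\<^sub>R b :: 'a))\<^sup>2))"
    by (simp add: norm_sum sum_distrib_left exp_sum)
  hence "integrable (distr (\<Pi>\<^sub>M b\<in>(Basis::'a set). lborel) borel (\<lambda>f. \<Sum>b\<in>Basis. f b *\<^sub>R b))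
      (\<lambda>s::'a. exp (- pi * (norm s)\<^sup>2))"
    by (subst integrable_distr_eq) auto
  hence "integrable lborel (\<lambda>s::'a. exp (- pi * (norm s)\<^sup>2))"
    by (simp add: lborel_eq[symmetric])
  thus ?thesis by (subst integrable_completion) auto
qed

lemma exp_minus_pi_norm_add_le:
  fixes x s :: "'a::real_normed_vector"
  assumes "norm x \<le> r"
  shows "exp (- pi * (norm (x + s))\<^sup>2) \<le> exp (pi * r\<^sup>2) * exp (- pi * (norm s)\<^sup>2 / 2)"
proof -
  have "norm s \<le> norm (x + s) + r"
    using norm_triangle_ineq4[of "x + s" x] assms by simp
  hence "(norm s)\<^sup>2 \<le> (norm (x + s) + r)\<^sup>2"
    by (intro power_mono) auto
  also have "\<dots> \<le> 2 * (norm (x + s))\<^sup>2 + 2 * r\<^sup>2"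
    using sum_squares_bound[of "norm (x + s)" r] by (simp add: power2_sum)
  finally have "pi * (norm s)\<^sup>2 \<le> pi * (2 * (norm (x + s))\<^sup>2 + 2 * r\<^sup>2)"
    by (rule mult_left_mono) simp
  hence "- pi * (norm (x + s))\<^sup>2 \<le> pi * r\<^sup>2 + - pi * (norm s)\<^sup>2 / 2"
    by (simp add: algebra_simps)
  thus ?thesis by (simp flip: exp_add)
qed

lemma measurable_lebesgue_translate:
  fixes a :: "'a::euclidean_space"
  shows "(\<lambda>x. a + x) \<in> lebesgue \<rightarrow>\<^sub>M lebesgue"
  using lebesgue_affine_measurable[of "\<lambda>_. 1" a] by (simp add: euclidean_representation)

lemma integral_lebesgue_translate:
  fixes F :: "'a::euclidean_space \<Rightarrow> 'b::{banach,second_countable_topology}"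
  assumes "F \<in> borel_measurable lebesgue"
  shows "integral\<^sup>L lebesgue F = (\<integral>s. F (a + s) \<partial>lebesgue)"
proof -
  have "lebesgue = distr lebesgue lebesgue (\<lambda>x. a + x)"
    using lebesgue_affine_euclidean[of "\<lambda>_. 1" a] by (simp add: euclidean_representation density_1)
  hence "integral\<^sup>L lebesgue F = integral\<^sup>L (distr lebesgue lebesgue (\<lambda>x. a + x)) F"
    by simp
  also have "\<dots> = (\<integral>s. F (a + s) \<partial>lebesgue)"
    by (rule integral_distr[OF measurable_lebesgue_translate assms])
  finally show ?thesis .
qed

lemma sigma_finite_lebesgue: "sigma_finite_measure (lebesgue :: 'a::euclidean_space measure)"
proof
  obtain A :: "'a set set" where A: "countable A" "A \<subseteq> sets lborel" "\<Union>A = space lborel"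
      "\<forall>a\<in>A. emeasure lborel a \<noteq> \<infinity>"
    using lborel.sigma_finite_countable by blast
  have "\<forall>a\<in>A. emeasure lebesgue a \<noteq> \<infinity>" using A by (auto simp: subset_eq)
  thus "\<exists>A::'a set set. countable A \<and> A \<subseteq> sets lebesgue \<and> \<Union>A = space lebesgue \<and>
      (\<forall>a\<in>A. emeasure lebesgue a \<noteq> \<infinity>)"
    using A by (intro exI[of _ A]) auto
qed

lemma borel_measurable_continuous_lborel_lebesgue:
  fixes F :: "real \<times> 'a::euclidean_space \<Rightarrow> 'b::euclidean_space"
  assumes "continuous_on UNIV F"
  shows "F \<in> borel_measurable (lborel \<Otimes>\<^sub>M lebesgue)"
proof -
  have "(\<lambda>x::'a. x) \<in> lebesgue \<rightarrow>\<^sub>M lborel"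
    by (rule measurable_completion) simp
  hence "(\<lambda>p. (fst p, snd p)) \<in> lborel \<Otimes>\<^sub>M lebesgue \<rightarrow>\<^sub>M lborel \<Otimes>\<^sub>M (lborel :: 'a measure)"
    by (intro measurable_Pair measurable_fst measurable_compose[OF measurable_snd])
  moreover have "F \<in> borel_measurable (lborel \<Otimes>\<^sub>M lborel)"
    unfolding lborel_prod by (subst measurable_cong_sets[OF sets_lborel refl])
      (rule borel_measurable_continuous_onI[OF assms])
  ultimately have "(\<lambda>p. F (fst p, snd p)) \<in> borel_measurable (lborel \<Otimes>\<^sub>M lebesgue)"
    by (rule measurable_compose)
  thus ?thesis by simp
qed

lemma (in pair_sigma_finite) integrable_dominated_by_product:
  fixes P :: "'a \<times> 'b \<Rightarrow> 'c::{banach,second_countable_topology}"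
  assumes P[measurable]: "P \<in> borel_measurable (M1 \<Otimes>\<^sub>M M2)"
    and A: "integrable M1 A" and B: "integrable M2 B"
    and bound: "\<And>x y. norm (P (x, y)) \<le> A x * B y" and B_nonneg: "\<And>y. 0 \<le> B y"
  shows "integrable (M1 \<Otimes>\<^sub>M M2) P"
proof (rule Fubini_integrable[OF P])
  have bound': "norm (P (x, y)) \<le> norm (A x) * B y" for x y
    using bound[of x y] mult_right_mono[OF abs_ge_self B_nonneg, of "A x" y] by simp
  have slice: "integrable M2 (\<lambda>y. P (x, y))" if "x \<in> space M1" for x
  proof (rule Bochner_Integration.integrable_bound[OF integrable_mult_right[OF B, of "norm (A x)"]])
    show "(\<lambda>y. P (x, y)) \<in> borel_measurable M2" using that by measurable
    show "AE y in M2. norm (P (x, y)) \<le> norm (norm (A x) * B y)"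
      using bound' B_nonneg by (intro AE_I2) (simp add: abs_mult)
  qed
  thus "AE x in M1. integrable M2 (\<lambda>y. P (x, y))" by simp
  show "integrable M1 (\<lambda>x. \<integral>y. norm (P (x, y)) \<partial>M2)"
  proof (rule Bochner_Integration.integrable_bound[OF integrable_mult_left[OF integrable_norm[OF A]]])
    show "(\<lambda>x. \<integral>y. norm (P (x, y)) \<partial>M2) \<in> borel_measurable M1"
      by (rule M2.borel_measurable_lebesgue_integral) (simp add: case_prod_beta')
    have "(\<integral>y. norm (P (x, y)) \<partial>M2) \<le> (\<integral>y. norm (A x) * B y \<partial>M2)" if "x \<in> space M1" for x
      using slice[OF that] B bound' by (intro integral_mono) auto
    thus "AE x in M1. norm (\<integral>y. norm (P (x, y)) \<partial>M2) \<le> norm (norm (A x) * (\<integral>y. B y \<partial>M2))"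
      using integral_nonneg_AE[of B M2] B_nonneg by (intro AE_I2) (simp add: abs_mult)
  qed
qed

lemma exp_pi_square_half_less:
  fixes N r :: real
  assumes "1 < N" and "0 \<le> r" and "r < sqrt (ln N / pi)"
  shows "exp (pi * r\<^sup>2 / 2) < N"
proof -
  have "r\<^sup>2 < (sqrt (ln N / pi))\<^sup>2"
    using assms(2,3) by (intro power_strict_mono) auto
  also have "\<dots> = ln N / pi"
    using assms(1) by simp
  finally have "pi * r\<^sup>2 < ln N"
    using pi_gt_zero by (simp add: field_simps)
  hence "pi * r\<^sup>2 / 2 < ln N"
    using mult_nonneg_nonneg[OF pi_ge_zero zero_le_power2[of r]] by linarith
  hence "exp (pi * r\<^sup>2 / 2) < exp (ln N)"
    by (rule exp_less_mono)
  thus ?thesis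
    using assms(1) by simp
qed

definition tf_circle_x :: "real \<Rightarrow> 'a::real_vector \<Rightarrow> real \<Rightarrow> 'a" where
  "tf_circle_x r e t = (r * cos (2 * pi * t)) *\<^sub>R e"

definition tf_circle_w :: "real \<Rightarrow> 'a::real_vector \<Rightarrow> real \<Rightarrow> 'a" where
  "tf_circle_w r e t = (r * sin (2 * pi * t)) *\<^sub>R e"

lemma tf_circle_radius:
  fixes e :: "'a::real_normed_vector"
  assumes "norm e = 1"
  shows "sqrt ((norm (tf_circle_x r e t))\<^sup>2 + (norm (tf_circle_w r e t))\<^sup>2) = \<bar>r\<bar>"
proof -
  have "(norm (tf_circle_x r e t))\<^sup>2 + (norm (tf_circle_w r e t))\<^sup>2
      = r\<^sup>2 * ((cos (2 * pi * t))\<^sup>2 + (sin (2 * pi * t))\<^sup>2)"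
    using assms by (simp only: tf_circle_x_def tf_circle_w_def norm_scaleR power_mult_distrib
        power2_abs distrib_left mult_1_right power_one)
  thus ?thesis by simp
qed

lemma norm_tf_circle_x_le:
  fixes e :: "'a::real_normed_vector"
  assumes "norm e = 1"
  shows "norm (tf_circle_x r e t) \<le> \<bar>r\<bar>"
  using assms by (simp add: tf_circle_x_def abs_mult abs_cos_le_one mult_left_le)

definition stft_gaussian_kernel :: "real^'n \<Rightarrow> real^'n \<Rightarrow> real^'n \<Rightarrow> complex" where
  "stft_gaussian_kernel x w s = exp (pi * \<i> * (x \<bullet> w)) *
     exp (- 2 * pi * \<i> * ((x + s) \<bullet> w)) * gaussian (x + s)"

lemma stft_gaussian_kernel_eq_exp:
  "stft_gaussian_kernel x w s = exp (pi * \<i> * (x \<bullet> w) + (- 2 * pi * \<i> * ((x + s) \<bullet> w))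
     + of_real (- pi * (norm (x + s))\<^sup>2))"
  by (simp add: stft_gaussian_kernel_def gaussian_def exp_of_real[symmetric] mult.assoc add.assoc
      flip: exp_add)

lemma norm_stft_gaussian_kernel:
  "norm (stft_gaussian_kernel x w s) = exp (- pi * (norm (x + s))\<^sup>2)"
  by (simp add: stft_gaussian_kernel_def gaussian_def norm_mult)

lemma norm_stft_gaussian_kernel_mult_le:
  fixes x w s :: "real^'n" and z :: complex
  assumes "norm x \<le> \<bar>r\<bar>"
  shows "norm (stft_gaussian_kernel x w s * z)
    \<le> exp (pi * r\<^sup>2) / 2 * (exp (- pi * (norm s)\<^sup>2) + (norm z)\<^sup>2)"
proof -
  have "norm (stft_gaussian_kernel x w s * z) = exp (- pi * (norm (x + s))\<^sup>2) * norm z"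
    by (simp add: norm_mult norm_stft_gaussian_kernel)
  also have "\<dots> \<le> exp (pi * r\<^sup>2) * (exp (- pi * (norm s)\<^sup>2 / 2) * norm z)"
    using mult_right_mono[OF exp_minus_pi_norm_add_le[OF assms] norm_ge_zero, of s z]
    by (simp add: mult.assoc)
  also have "\<dots> \<le> exp (pi * r\<^sup>2) * (((exp (- pi * (norm s)\<^sup>2 / 2))\<^sup>2 + (norm z)\<^sup>2) / 2)"
    using sum_squares_bound[of "exp (- pi * (norm s)\<^sup>2 / 2)" "norm z"] by simp
  also have "(exp (- pi * (norm s)\<^sup>2 / 2))\<^sup>2 = exp (- pi * (norm s)\<^sup>2)"
    by (simp flip: exp_double)
  finally show ?thesis
    by simp
qed

lemma stft_gaussian_eq_kernel_integral:
  fixes g :: "real^'n \<Rightarrow> complex"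
  assumes g: "g \<in> borel_measurable lebesgue"
  shows "exp (pi * \<i> * (x \<bullet> w)) * stft g gaussian x w
    = (\<integral>s. stft_gaussian_kernel x w s * cnj (g s) \<partial>lebesgue)"
proof -
  let ?F = "\<lambda>t. exp (- 2 * complex_of_real pi * \<i> * complex_of_real (t \<bullet> w)) * gaussian t * cnj (g (t - x))"
  have "(\<lambda>t. t - x) \<in> lebesgue \<rightarrow>\<^sub>M lebesgue"
    using measurable_lebesgue_translate[of "- x"] by simp
  hence "(\<lambda>t. g (t - x)) \<in> borel_measurable lebesgue"
    using g by (rule measurable_compose)
  hence "(\<lambda>t. cnj (g (t - x))) \<in> borel_measurable lebesgue"
    by (rule measurable_compose) (intro borel_measurable_continuous_onI continuous_intros)
  moreover have "(\<lambda>t. exp (- 2 * complex_of_real pi * \<i> * complex_of_real (t \<bullet> w)) * gaussian t)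
      \<in> borel_measurable lebesgue"
    by (intro measurable_completion borel_measurable_continuous_onI)
      (auto simp: gaussian_def intro!: continuous_intros)
  ultimately have "?F \<in> borel_measurable lebesgue"
    by measurable
  hence "stft g gaussian x w = (\<integral>s. ?F (x + s) \<partial>lebesgue)"
    unfolding stft_def by (rule integral_lebesgue_translate)
  thus ?thesis
    by (simp add: stft_gaussian_kernel_def mult_ac flip: integral_mult_right_zero)
qed

lemma stft_gaussian_kernel_on_tf_circle:
  fixes e s :: "real^'n" and t :: real
  assumes "norm e = 1"
  defines "u \<equiv> exp (2 * pi * \<i> * t)"
  shows "stft_gaussian_kernel (tf_circle_x r e t) (tf_circle_w r e t) s
    = exp (- pi * r\<^sup>2 / 2) * gaussian s
      * exp (of_real (- 2 * pi * r * (s \<bullet> e)) * u + of_real (- pi * r\<^sup>2 / 2) * u\<^sup>2)"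
proof -
  define c sn where "c = cos (2 * pi * t)" and "sn = sin (2 * pi * t)"
  have ee: "e \<bullet> e = 1"
    using assms by (simp add: power2_norm_eq_inner[symmetric])
  have u: "u = Complex c sn"
    by (simp add: u_def c_def sn_def complex_eq_iff Re_exp Im_exp)
  have xw: "tf_circle_x r e t \<bullet> tf_circle_w r e t = r\<^sup>2 * c * sn"
    by (simp add: tf_circle_x_def tf_circle_w_def ee c_def sn_def power2_eq_square)
  have xsw: "(tf_circle_x r e t + s) \<bullet> tf_circle_w r e t = r\<^sup>2 * c * sn + r * sn * (s \<bullet> e)"
    by (simp add: tf_circle_x_def tf_circle_w_def inner_add_left ee c_def sn_def
        power2_eq_square inner_commute[of s e] algebra_simps)
  have nxs: "(norm (tf_circle_x r e t + s))\<^sup>2 = (norm s)\<^sup>2 + 2 * r * c * (s \<bullet> e) + r\<^sup>2 * c\<^sup>2"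
    unfolding power2_norm_eq_inner
    by (simp add: inner_add_left inner_add_right tf_circle_x_def ee c_def inner_commute[of s e]
        power2_eq_square algebra_simps)
  have sn2: "sn * sn = 1 - c * c"
    using sin_cos_squared_add[of "2 * pi * t"] by (simp add: c_def sn_def power2_eq_square)
  have lhs: "stft_gaussian_kernel (tf_circle_x r e t) (tf_circle_w r e t) s
    = exp (pi * \<i> * (r\<^sup>2 * c * sn) + (- 2 * pi * \<i> * (r\<^sup>2 * c * sn + r * sn * (s \<bullet> e)))
        + of_real (- pi * ((norm s)\<^sup>2 + 2 * r * c * (s \<bullet> e) + r\<^sup>2 * c\<^sup>2)))"
    unfolding stft_gaussian_kernel_eq_exp xw xsw nxs ..
  have rhs: "exp (- pi * r\<^sup>2 / 2) * gaussian s
      * exp (of_real (- 2 * pi * r * (s \<bullet> e)) * u + of_real (- pi * r\<^sup>2 / 2) * u\<^sup>2)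
    = exp (of_real (- pi * r\<^sup>2 / 2) + of_real (- pi * (norm s)\<^sup>2)
        + (of_real (- 2 * pi * r * (s \<bullet> e)) * u + of_real (- pi * r\<^sup>2 / 2) * u\<^sup>2))"
    by (simp add: gaussian_def exp_of_real[symmetric] mult.assoc add.assoc flip: exp_add)
  have "pi * \<i> * (r\<^sup>2 * c * sn) + (- 2 * pi * \<i> * (r\<^sup>2 * c * sn + r * sn * (s \<bullet> e)))
        + of_real (- pi * ((norm s)\<^sup>2 + 2 * r * c * (s \<bullet> e) + r\<^sup>2 * c\<^sup>2))
    = of_real (- pi * r\<^sup>2 / 2) + of_real (- pi * (norm s)\<^sup>2)
      + (of_real (- 2 * pi * r * (s \<bullet> e)) * u + of_real (- pi * r\<^sup>2 / 2) * u\<^sup>2)"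
    unfolding complex_eq_iff u
    by (simp add: power2_eq_square) (simp add: sn2 algebra_simps, simp add: field_simps)
  thus ?thesis
    using lhs rhs by simp
qed

lemma circle_mean_stft_gaussian_kernel:
  fixes e s :: "real^'n"
  assumes "norm e = 1"
  shows "(\<integral>t. indicator {0..1::real} t *\<^sub>R stft_gaussian_kernel (tf_circle_x r e t) (tf_circle_w r e t) s \<partial>lborel)
    = exp (- pi * r\<^sup>2 / 2) * gaussian s"
proof -
  define F where "F z = exp (of_real (- 2 * pi * r * (s \<bullet> e)) * z + of_real (- pi * r\<^sup>2 / 2) * z\<^sup>2)"
    for z :: complex
  have "(\<integral>t. indicator {0..1::real} t *\<^sub>R stft_gaussian_kernel (tf_circle_x r e t) (tf_circle_w r e t) s \<partial>lborel)
      = (\<integral>t. (exp (- pi * r\<^sup>2 / 2) * gaussian s)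
           * (indicator {0..1::real} t *\<^sub>R F (exp (2 * pi * \<i> * t))) \<partial>lborel)"
    by (intro Bochner_Integration.integral_cong refl)
      (simp add: stft_gaussian_kernel_on_tf_circle[OF assms] F_def)
  also have "\<dots> = exp (- pi * r\<^sup>2 / 2) * gaussian s
      * (\<integral>t. indicator {0..1::real} t *\<^sub>R F (exp (2 * pi * \<i> * t)) \<partial>lborel)"
    by (rule integral_mult_right_zero)
  also have "(\<integral>t. indicator {0..1::real} t *\<^sub>R F (exp (2 * pi * \<i> * t)) \<partial>lborel) = F 0"
    by (rule lborel_integral_circle_mean) (auto simp: F_def intro!: holomorphic_intros continuous_intros)
  finally show ?thesis by (simp add: F_def)
qed

lemma integrable_stft_gaussian_kernel_tf_circle:
  fixes g :: "real^'n \<Rightarrow> complex" and e :: "real^'n" and r :: real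
  assumes "g \<in> L2" and e: "norm e = 1"
  defines "x \<equiv> tf_circle_x r e" and "w \<equiv> tf_circle_w r e"
  shows "integrable (lborel \<Otimes>\<^sub>M lebesgue)
    (\<lambda>(t, s). indicator {0..1::real} t *\<^sub>R (stft_gaussian_kernel (x t) (w t) s * cnj (g s)))"
    (is "integrable _ ?P")
proof -
  have g_meas: "g \<in> borel_measurable lebesgue"
    and g_sq: "integrable lebesgue (\<lambda>s. (norm (g s))\<^sup>2)"
    using \<open>g \<in> L2\<close> by (auto simp: L2_def)
  interpret pair_sigma_finite "lborel :: real measure" "lebesgue :: (real^'n) measure"
    by (intro pair_sigma_finite.intro sigma_finite_lborel sigma_finite_lebesgue)
  define B where "B s = exp (pi * r\<^sup>2) / 2 * (exp (- pi * (norm s)\<^sup>2) + (norm (g s))\<^sup>2)" for s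
  have "(\<lambda>p. stft_gaussian_kernel (x (fst p)) (w (fst p)) (snd p)) \<in> borel_measurable (lborel \<Otimes>\<^sub>M lebesgue)"
    by (rule borel_measurable_continuous_lborel_lebesgue)
      (auto simp: stft_gaussian_kernel_def gaussian_def x_def w_def tf_circle_x_def tf_circle_w_def
        intro!: continuous_intros)
  moreover have "(\<lambda>p. cnj (g (snd p))) \<in> borel_measurable (lborel \<Otimes>\<^sub>M lebesgue)"
    by (rule measurable_compose[OF measurable_compose[OF measurable_snd g_meas]])
      (intro borel_measurable_continuous_onI continuous_intros)
  moreover have "(\<lambda>p. indicator {0..1::real} (fst p) :: real) \<in> borel_measurable (lborel \<Otimes>\<^sub>M lebesgue)"
    by (rule measurable_compose[OF measurable_fst borel_measurable_indicator]) simp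
  ultimately have P_meas: "?P \<in> borel_measurable (lborel \<Otimes>\<^sub>M lebesgue)"
    unfolding case_prod_beta' by (intro borel_measurable_scaleR borel_measurable_times)
  have B_int: "integrable lebesgue B"
    unfolding B_def
    by (intro integrable_mult_right Bochner_Integration.integrable_add
        integrable_lebesgue_exp_minus_pi_norm_square g_sq)
  have P_bound: "norm (?P (t, s)) \<le> indicator {0..1::real} t * B s" for t s
    using norm_stft_gaussian_kernel_mult_le[OF norm_tf_circle_x_le[OF e], of r t "w t" s "cnj (g s)"]
    by (simp add: B_def x_def indicator_def)
  show ?thesis
    using P_meas integrable_real_indicator[of "{0..1::real}" lborel] B_int P_bound
    by (rule integrable_dominated_by_product) (simp_all add: B_def)
qed

lemma stft_gaussian_tf_circle_mean:
  fixes g :: "real^'n \<Rightarrow> complex" and e :: "real^'n" and r :: real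
  assumes "g \<in> L2" and e: "norm e = 1"
  defines "x \<equiv> tf_circle_x r e" and "w \<equiv> tf_circle_w r e"
  shows "has_bochner_integral lborel
    (\<lambda>t. indicator {0..1::real} t *\<^sub>R (exp (pi * \<i> * (x t \<bullet> w t)) * stft g gaussian (x t) (w t)))
    (exp (- pi * r\<^sup>2 / 2) * inner_L2 gaussian g)"
proof -
  have g_meas: "g \<in> borel_measurable lebesgue"
    using \<open>g \<in> L2\<close> by (simp add: L2_def)
  interpret pair_sigma_finite "lborel :: real measure" "lebesgue :: (real^'n) measure"
    by (intro pair_sigma_finite.intro sigma_finite_lborel sigma_finite_lebesgue)
  define P where "P = (\<lambda>(t, s). indicator {0..1::real} t *\<^sub>R (stft_gaussian_kernel (x t) (w t) s * cnj (g s)))"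
  have P_int: "integrable (lborel \<Otimes>\<^sub>M lebesgue) P"
    unfolding P_def x_def w_def by (rule integrable_stft_gaussian_kernel_tf_circle[OF \<open>g \<in> L2\<close> e])
  have integral_s: "(\<integral>s. P (t, s) \<partial>lebesgue)
      = indicator {0..1::real} t *\<^sub>R (exp (pi * \<i> * (x t \<bullet> w t)) * stft g gaussian (x t) (w t))" for t
    by (simp add: P_def stft_gaussian_eq_kernel_integral[OF g_meas])
  have integral_t: "(\<integral>t. P (t, s) \<partial>lborel) = exp (- pi * r\<^sup>2 / 2) * (gaussian s * cnj (g s))" for s
  proof -
    have "(\<integral>t. P (t, s) \<partial>lborel) = (\<integral>t. (indicator {0..1::real} t *\<^sub>R stft_gaussian_kernel (x t) (w t) s)
        * cnj (g s) \<partial>lborel)"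
      by (simp add: P_def)
    also have "\<dots> = (\<integral>t. indicator {0..1::real} t *\<^sub>R stft_gaussian_kernel (x t) (w t) s \<partial>lborel) * cnj (g s)"
      by (rule integral_mult_left_zero)
    finally show ?thesis
      using circle_mean_stft_gaussian_kernel[OF e, of r s] by (simp add: x_def w_def mult.assoc)
  qed
  have "(\<integral>t. (\<integral>s. P (t, s) \<partial>lebesgue) \<partial>lborel) = (\<integral>s. (\<integral>t. P (t, s) \<partial>lborel) \<partial>lebesgue)"
    using Fubini_integral[of "\<lambda>t s. P (t, s)"] P_int by simp
  also have "\<dots> = exp (- pi * r\<^sup>2 / 2) * inner_L2 gaussian g"
    by (simp add: integral_t inner_L2_def)
  finally show ?thesis
    using integrable_fst'[OF P_int] by (simp only: has_bochner_integral_iff integral_s)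
qed

lemma stft_gaussian_circle_lower_bound:
  fixes g :: "real^'n \<Rightarrow> complex"
  assumes "g \<in> L2" and "0 \<le> r"
    and bound: "\<And>x w. sqrt ((norm x)\<^sup>2 + (norm w)\<^sup>2) = r \<Longrightarrow> norm (stft g gaussian x w) \<le> M"
  shows "exp (- pi * r\<^sup>2 / 2) * norm (inner_L2 gaussian g) \<le> M"
proof -
  obtain e :: "real^'n" where e: "norm e = 1"
    using vector_choose_size[of 1] by auto
  define f where "f t = indicator {0..1::real} t *\<^sub>R (exp (pi * \<i> * (tf_circle_x r e t \<bullet> tf_circle_w r e t))
    * stft g gaussian (tf_circle_x r e t) (tf_circle_w r e t))" for t
  have "has_bochner_integral lborel f (exp (- pi * r\<^sup>2 / 2) * inner_L2 gaussian g)"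
    unfolding f_def by (rule stft_gaussian_tf_circle_mean[OF \<open>g \<in> L2\<close> e])
  hence f_int: "integrable lborel f" and f_integral: "integral\<^sup>L lborel f = exp (- pi * r\<^sup>2 / 2) * inner_L2 gaussian g"
    by (simp_all add: has_bochner_integral_iff)
  have "exp (- pi * r\<^sup>2 / 2) * norm (inner_L2 gaussian g) = norm (integral\<^sup>L lborel f)"
    by (simp add: f_integral norm_mult)
  also have "\<dots> \<le> (\<integral>t. norm (f t) \<partial>lborel)"
    by (rule integral_norm_bound)
  also have "\<dots> \<le> (\<integral>t. indicator {0..1::real} t * M \<partial>lborel)"
  proof (rule integral_mono)
    show "integrable lborel (\<lambda>t. norm (f t))"
      using f_int by simp
    show "norm (f t) \<le> indicator {0..1::real} t * M" for t
      using bound[OF tf_circle_radius[OF e, of r t, unfolded abs_of_nonneg[OF \<open>0 \<le> r\<close>]]]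
      by (simp add: f_def norm_mult indicator_def)
  qed (simp add: integrable_real_mult_indicator)
  also have "\<dots> = M"
    by simp
  finally show ?thesis .
qed

theorem mainTheorem3:
  fixes N R :: real and g :: "real^'n \<Rightarrow> complex"
  assumes "N > 1" and "0 < R" and "R < sqrt (ln N / pi)"
    and "g \<in> L2" and "\<not> (AE t in lebesgue. g t = 0)"
  shows "\<not> (\<forall>x w. sqrt ((norm x)\<^sup>2 + (norm w)\<^sup>2) > R \<longrightarrow>
              norm (stft g gaussian x w) < norm (inner_L2 gaussian g) / N)"
proof
  assume small: "\<forall>x w. sqrt ((norm x)\<^sup>2 + (norm w)\<^sup>2) > R \<longrightarrow>
              norm (stft g gaussian x w) < norm (inner_L2 gaussian g) / N"
  define c where "c = norm (inner_L2 gaussian g)"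
  define r where "r = (R + sqrt (ln N / pi)) / 2"
  have r: "0 < r" "R < r" "r < sqrt (ln N / pi)"
    using assms(2,3) by (auto simp: r_def)
  have "exp (pi * r\<^sup>2 / 2) < N"
    using assms(1) r by (intro exp_pi_square_half_less) auto
  moreover have "exp (- pi * r\<^sup>2 / 2) * c \<le> c / N"
    using stft_gaussian_circle_lower_bound[OF \<open>g \<in> L2\<close>, of r "c / N"] small r
    by (auto simp: c_def less_imp_le)
  moreover have "0 < c"
  proof -
    obtain x :: "real^'n" where "norm x = r"
      using vector_choose_size[of r] r(1) by auto
    hence "sqrt ((norm x)\<^sup>2 + (norm (0 :: real^'n))\<^sup>2) > R"
      using r by simp
    hence "norm (stft g gaussian x 0) < c / N"
      using small c_def by blast
    hence "0 < c / N"
      by (meson le_less_trans norm_ge_zero)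
    thus ?thesis
      using assms(1) by (simp add: zero_less_divide_iff)
  qed
  ultimately have "exp (- pi * r\<^sup>2 / 2) * N \<le> 1" and "1 < exp (- pi * r\<^sup>2 / 2) * N"
    using assms(1) by (simp_all add: field_simps exp_minus)
  thus False by simp
qed

end
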